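(* Let $A_1,A_2\subset\mathbb{Z}^2$ be finite with $|A_1|,|A_2|\ge2$ and $\mathbb{Z}A_1+\mathbb{Z}A_2=\mathbb{Z}^2$, and let $f=\bigoplus_{i\in A_1}p^1_i\odot w^i$, $g=\bigoplus_{i\in A_2}p^2_i\odot w^i$ be tropical polynomials with supports $A_1,A_2$. Let $q=(q_1,q_2)\in\mathcal{T}(f)\cap\mathcal{T}(g)$. Then $q$ is a non-transversal intersection point of $\mathcal{T}(f)$ and $\mathcal{T}(g)$ if and only if there exists $l\in\mathbb{R}$ such that $(q_1,q_2,l)$ is a singular point of $\mathcal{T}(f\oplus w_3\odot g)$.
   Context: $\mathbb{K}$ is an algebraically closed field of characteristic $0$ with a rank-one non-archimedean valuation $val$ whose residue field has characteristic $0$. Tropical operations $\oplus=\min$, $\odot=+$, $w^i=\langle i,w\rangle$, all coefficients real; $\mathcal{T}(h)$ is the set where the minimum of the terms of $h$ is attained at least twice. $f\oplus w_3\odot g$ denotes the tropical polynomial $\bigoplus_{i\in A_1}p^1_i\odot w^{(i,0)}\oplus\bigoplus_{i\in A_2}p^2_i\odot w^{(i,1)}$ in $w=(w_1,w_2,w_3)$, with support $A_1\times\{0\}\cup A_2\times\{1\}\subset\mathbb{Z}^3$. For a tropical polynomial $h=\bigoplus_{k\in S}c_k\odot w^k$, a point $\overline q\in\mathcal{T}(h)$ is singular if there exist $H=\sum_{k\in S}a_kx^k$ over $\mathbb{K}$ with $val(a_k)=c_k$ and $b\in(\mathbb{K}^* )^3$ with $val(b)=\overline q$ such that $H(b)=0$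 and all partial derivatives of $H$ vanish at $b$. A point $q\in\mathcal{T}(f)\cap\mathcal{T}(g)$ is a non-transversal intersection point if there exist $F=\sum_{i\in A_1}a^1_ix^i$, $G=\sum_{i\in A_2}a^2_ix^i$ over $\mathbb{K}$ with $val(a^1_i)=p^1_i$, $val(a^2_i)=p^2_i$, and $b\in(\mathbb{K}^* )^2$ with $val(b)=q$, such that $F(b)=G(b)=0$ and the system $F_{x_1}(b)y_1+G_{x_1}(b)y_2=F_{x_2}(b)y_1+G_{x_2}(b)y_2=0$ has a solution $(y_1,y_2)\in(\mathbb{K}^* )^2$. *)

theory Defs
  imports Main "HOL-Computational_Algebra.Polynomial"
begin

text \<open>A rank-one non-archimedean valuation on the field K: a map from K* to the
reals (its value on 0 is irrelevant and never used), turning products into sums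
and satisfying the ultrametric inequality.\<close>

definition nonarch_valuation :: "('k::field \<Rightarrow> real) \<Rightarrow> bool" where
  "nonarch_valuation val \<longleftrightarrow>
     (\<forall>x y. x \<noteq> 0 \<longrightarrow> y \<noteq> 0 \<longrightarrow> val (x * y) = val x + val y) \<and>
     (\<forall>x y. x \<noteq> 0 \<longrightarrow> y \<noteq> 0 \<longrightarrow> x + y \<noteq> 0 \<longrightarrow> val (x + y) \<ge> min (val x) (val y))"

text \<open>The residue field (valuation ring modulo maximal ideal) has characteristic 0:
no positive integer n lies in the maximal ideal, i.e. val(n) = 0.\<close>

definition residue_char_0 :: "('k::field_char_0 \<Rightarrow> real) \<Rightarrow> bool" where
  "residue_char_0 val \<longleftrightarrow> (\<forall>n::nat. n > 0 \<longrightarrow> val (of_nat n) = 0)"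

definition alg_closed :: "'k::field itself \<Rightarrow> bool" where
  "alg_closed TYPE('k) \<longleftrightarrow> (\<forall>p :: 'k poly. degree p > 0 \<longrightarrow> (\<exists>x. poly p x = 0))"

text \<open>The point w lies in T(h), h = min over k in S of (c k + <k,w>), if the
minimum is attained at least twice.\<close>

definition trop_min_twice :: "'i set \<Rightarrow> ('i \<Rightarrow> real) \<Rightarrow> bool" where
  "trop_min_twice S t \<longleftrightarrow>
     (\<exists>k1\<in>S. \<exists>k2\<in>S. k1 \<noteq> k2 \<and> t k1 = t k2 \<and> (\<forall>k\<in>S. t k1 \<le> t k))"

definition trop_hyp2 :: "(int \<times> int) set \<Rightarrow> (int \<times> int \<Rightarrow> real) \<Rightarrow> (real \<times> real) set" where
  "trop_hyp2 S c = {w. trop_min_twice S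
      (\<lambda>k. c k + real_of_int (fst k) * fst w + real_of_int (snd k) * snd w)}"

definition trop_hyp3 :: "(int \<times> int \<times> int) set \<Rightarrow> (int \<times> int \<times> int \<Rightarrow> real)
                          \<Rightarrow> (real \<times> real \<times> real) set" where
  "trop_hyp3 S c = {w. trop_min_twice S
      (\<lambda>k. c k + real_of_int (fst k) * fst w + real_of_int (fst (snd k)) * fst (snd w)
             + real_of_int (snd (snd k)) * snd (snd w))}"

definition lpoly2 :: "(int \<times> int) set \<Rightarrow> (int \<times> int \<Rightarrow> 'k::field) \<Rightarrow> 'k \<times> 'k \<Rightarrow> 'k" where
  "lpoly2 S a x = (\<Sum>k\<in>S. a k * fst x powi fst k * snd x powi snd k)"

definition lpoly2_d1 :: "(int \<times> int) set \<Rightarrow> (int \<times> int \<Rightarrow> 'k::field) \<Rightarrow> 'k \<times> 'k \<Rightarrow> 'k" where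
  "lpoly2_d1 S a x = (\<Sum>k\<in>S. a k * of_int (fst k) * fst x powi (fst k - 1) * snd x powi snd k)"

definition lpoly2_d2 :: "(int \<times> int) set \<Rightarrow> (int \<times> int \<Rightarrow> 'k::field) \<Rightarrow> 'k \<times> 'k \<Rightarrow> 'k" where
  "lpoly2_d2 S a x = (\<Sum>k\<in>S. a k * of_int (snd k) * fst x powi fst k * snd x powi (snd k - 1))"

definition lpoly3 :: "(int \<times> int \<times> int) set \<Rightarrow> (int \<times> int \<times> int \<Rightarrow> 'k::field) \<Rightarrow> 'k \<times> 'k \<times> 'k \<Rightarrow> 'k" where
  "lpoly3 S a x = (\<Sum>k\<in>S. a k * fst x powi fst k * fst (snd x) powi fst (snd k)
                              * snd (snd x) powi snd (snd k))"

definition lpoly3_d1 :: "(int \<times> int \<times> int) set \<Rightarrow> (int \<times> int \<times> int \<Rightarrow> 'k::field) \<Rightarrow> 'k \<times> 'k \<times> 'k \<Rightarrow> 'k" where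
  "lpoly3_d1 S a x = (\<Sum>k\<in>S. a k * of_int (fst k) * fst x powi (fst k - 1)
                              * fst (snd x) powi fst (snd k) * snd (snd x) powi snd (snd k))"

definition lpoly3_d2 :: "(int \<times> int \<times> int) set \<Rightarrow> (int \<times> int \<times> int \<Rightarrow> 'k::field) \<Rightarrow> 'k \<times> 'k \<times> 'k \<Rightarrow> 'k" where
  "lpoly3_d2 S a x = (\<Sum>k\<in>S. a k * of_int (fst (snd k)) * fst x powi fst k
                              * fst (snd x) powi (fst (snd k) - 1) * snd (snd x) powi snd (snd k))"

definition lpoly3_d3 :: "(int \<times> int \<times> int) set \<Rightarrow> (int \<times> int \<times> int \<Rightarrow> 'k::field) \<Rightarrow> 'k \<times> 'k \<times> 'k \<Rightarrow> 'k" where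
  "lpoly3_d3 S a x = (\<Sum>k\<in>S. a k * of_int (snd (snd k)) * fst x powi fst k
                              * fst (snd x) powi fst (snd k) * snd (snd x) powi (snd (snd k) - 1))"

definition lifts :: "('k::field \<Rightarrow> real) \<Rightarrow> 'i set \<Rightarrow> ('i \<Rightarrow> 'k) \<Rightarrow> ('i \<Rightarrow> real) \<Rightarrow> bool" where
  "lifts val S a c \<longleftrightarrow> (\<forall>k\<in>S. a k \<noteq> 0 \<and> val (a k) = c k)"

definition trop_singular3 ::
  "('k::field \<Rightarrow> real) \<Rightarrow> (int \<times> int \<times> int) set \<Rightarrow> (int \<times> int \<times> int \<Rightarrow> real)
     \<Rightarrow> real \<times> real \<times> real \<Rightarrow> bool" where
  "trop_singular3 val S c q \<longleftrightarrow> q \<in> trop_hyp3 S c \<and>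
     (\<exists>(a :: int \<times> int \<times> int \<Rightarrow> 'k) (b :: 'k \<times> 'k \<times> 'k).
        lifts val S a c \<and>
        fst b \<noteq> 0 \<and> fst (snd b) \<noteq> 0 \<and> snd (snd b) \<noteq> 0 \<and>
        val (fst b) = fst q \<and> val (fst (snd b)) = fst (snd q) \<and> val (snd (snd b)) = snd (snd q) \<and>
        lpoly3 S a b = 0 \<and> lpoly3_d1 S a b = 0 \<and> lpoly3_d2 S a b = 0 \<and> lpoly3_d3 S a b = 0)"

definition non_transversal ::
  "('k::field \<Rightarrow> real) \<Rightarrow> (int \<times> int) set \<Rightarrow> (int \<times> int \<Rightarrow> real)
     \<Rightarrow> (int \<times> int) set \<Rightarrow> (int \<times> int \<Rightarrow> real) \<Rightarrow> real \<times> real \<Rightarrow> bool" where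
  "non_transversal val A1 p1 A2 p2 q \<longleftrightarrow> q \<in> trop_hyp2 A1 p1 \<and> q \<in> trop_hyp2 A2 p2 \<and>
     (\<exists>(a1 :: int \<times> int \<Rightarrow> 'k) (a2 :: int \<times> int \<Rightarrow> 'k) (b :: 'k \<times> 'k).
        lifts val A1 a1 p1 \<and> lifts val A2 a2 p2 \<and>
        fst b \<noteq> 0 \<and> snd b \<noteq> 0 \<and> val (fst b) = fst q \<and> val (snd b) = snd q \<and>
        lpoly2 A1 a1 b = 0 \<and> lpoly2 A2 a2 b = 0 \<and>
        (\<exists>y1 y2. y1 \<noteq> 0 \<and> y2 \<noteq> 0 \<and>
            lpoly2_d1 A1 a1 b * y1 + lpoly2_d1 A2 a2 b * y2 = 0 \<and>
            lpoly2_d2 A1 a1 b * y1 + lpoly2_d2 A2 a2 b * y2 = 0))"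

section \<open>Cayley configuration f (+) w3 (.) g\<close>

definition cayley_supp :: "(int \<times> int) set \<Rightarrow> (int \<times> int) set \<Rightarrow> (int \<times> int \<times> int) set" where
  "cayley_supp A1 A2 = (\<lambda>i. (fst i, snd i, 0)) ` A1 \<union> (\<lambda>i. (fst i, snd i, 1)) ` A2"

definition cayley_coeff :: "(int \<times> int \<Rightarrow> real) \<Rightarrow> (int \<times> int \<Rightarrow> real) \<Rightarrow> int \<times> int \<times> int \<Rightarrow> real" where
  "cayley_coeff p1 p2 k = (if snd (snd k) = 0 then p1 (fst k, fst (snd k)) else p2 (fst k, fst (snd k)))"

definition int_span2 :: "(int \<times> int) set \<Rightarrow> (int \<times> int) set" where
  "int_span2 A = {(\<Sum>i\<in>A. c i * fst i, \<Sum>i\<in>A. c i * snd i) | c :: int \<times> int \<Rightarrow> int. True}"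

end

theory Submission imports Defs begin

text \<open>Cayley trick. Lifts of f \<oplus> w3 \<odot> g are exactly the polynomials
H = F + x3 G with F, G lifts of f and g, and the gradient of H at (b, b3) is
(F_x + b3 G_x, F_y + b3 G_y, G). So H is singular at (b, b3) iff F(b) = G(b) = 0 and
(1, b3) solves the linear system defining non-transversality; conversely a
solution (y1, y2) yields b3 = y2 / y1. The value l = val b3 puts (q, l) on the
tropical hypersurface because the valuation of a vanishing sum of nonzero terms
attains its minimum twice.\<close>

lemma val_one:
  assumes "nonarch_valuation val"
  shows "val (1::'k::field) = 0"
proof -
  have "val (1 * 1 :: 'k) = val 1 + val 1"
    using assms unfolding nonarch_valuation_def by (metis one_neq_zero)
  then show ?thesis by simp
qed

lemma val_mult:
  assumes "nonarch_valuation val" "x \<noteq> 0" "y \<noteq> 0"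
  shows "val (x * y :: 'k::field) = val x + val y"
  using assms unfolding nonarch_valuation_def by simp

lemma val_inverse:
  assumes "nonarch_valuation val" "(x::'k::field) \<noteq> 0"
  shows "val (inverse x) = - val x"
proof -
  have "val (x * inverse x) = val x + val (inverse x)"
    using assms by (intro val_mult) simp_all
  then show ?thesis using assms by (simp add: val_one)
qed

lemma val_power:
  assumes "nonarch_valuation val" "(x::'k::field) \<noteq> 0"
  shows "val (x ^ n) = real n * val x"
proof (induction n)
  case 0
  then show ?case using assms by (simp add: val_one)
next
  case (Suc n)
  then show ?case using assms by (simp add: val_mult algebra_simps)
qed

lemma val_powi:
  assumes "nonarch_valuation val" "(x::'k::field) \<noteq> 0"
  shows "val (x powi n) = real_of_int n * val x"
proof (cases "n \<ge> 0")
  case True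
  then show ?thesis using val_power[OF assms, of "nat n"] by (simp add: power_int_def)
next
  case False
  then show ?thesis
    using assms val_power[OF assms(1), of "inverse x" "nat (- n)"]
    by (simp add: power_int_def val_inverse)
qed

lemma val_minus:
  assumes "nonarch_valuation val" "(x::'k::field) \<noteq> 0"
  shows "val (- x) = val x"
proof -
  have "val ((-1) * (-1) :: 'k) = val (-1) + val (-1)"
    using assms(1) by (intro val_mult) simp_all
  then have "val (-1 :: 'k) = 0" using assms(1) by (simp add: val_one)
  then show ?thesis using val_mult[OF assms(1), of "-1" x] assms(2) by simp
qed

lemma val_sum_greater:
  assumes "nonarch_valuation val" "finite T"
    and "\<forall>k\<in>T. f k \<noteq> (0::'k::field) \<and> val (f k) > m" "sum f T \<noteq> 0"
  shows "val (sum f T) > m"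
  using assms(2-)
proof (induction T rule: finite_induct)
  case empty
  then show ?case by simp
next
  case (insert x T)
  show ?case
  proof (cases "sum f T = 0")
    case True
    then show ?thesis using insert by simp
  next
    case False
    then have "val (sum f T) > m" using insert by simp
    moreover have "val (f x + sum f T) \<ge> min (val (f x)) (val (sum f T))"
      using assms(1) False insert unfolding nonarch_valuation_def by auto
    ultimately show ?thesis using insert by (simp add: min_le_iff_disj) linarith
  qed
qed

lemma trop_min_twice_val_if_sum_eq_0:
  assumes "nonarch_valuation val" "finite S" "S \<noteq> {}"
    and "\<forall>k\<in>S. f k \<noteq> (0::'k::field)" "sum f S = 0"
  shows "trop_min_twice S (\<lambda>k. val (f k))"
proof -
  obtain k0 where k0: "k0 \<in> S" "\<forall>k\<in>S. val (f k0) \<le> val (f k)"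
  proof -
    have "Min ((\<lambda>k. val (f k)) ` S) \<in> (\<lambda>k. val (f k)) ` S"
      using assms(2,3) by simp
    then obtain k0 where "k0 \<in> S" "val (f k0) = Min ((\<lambda>k. val (f k)) ` S)" by auto
    then show ?thesis using that assms(2) by simp
  qed
  have "\<exists>k1\<in>S. k1 \<noteq> k0 \<and> val (f k1) = val (f k0)"
  proof (rule ccontr)
    assume "\<not> ?thesis"
    then have greater: "\<forall>k\<in>S - {k0}. f k \<noteq> 0 \<and> val (f k) > val (f k0)"
      using k0 assms(4) by force
    have rest: "sum f (S - {k0}) = - f k0"
      using assms(2,5) k0(1) by (simp add: sum.remove eq_neg_iff_add_eq_0 add.commute)
    then have "val (sum f (S - {k0})) > val (f k0)"
      using val_sum_greater[OF assms(1) _ greater] assms(2,4) k0(1) by simp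
    then show False using rest val_minus[OF assms(1)] assms(4) k0(1) by simp
  qed
  then show ?thesis unfolding trop_min_twice_def using k0 by metis
qed

lemma trop_min_twice_cong:
  "(\<And>k. k \<in> S \<Longrightarrow> t k = t' k) \<Longrightarrow> trop_min_twice S t \<longleftrightarrow> trop_min_twice S t'"
  unfolding trop_min_twice_def by simp

lemma val_monomial3:
  assumes "nonarch_valuation val" "c \<noteq> 0" "x \<noteq> 0" "y \<noteq> 0" "z \<noteq> (0::'k::field)"
  shows "val (c * x powi i * y powi j * z powi k)
       = val c + real_of_int i * val x + real_of_int j * val y + real_of_int k * val z"
  using assms by (simp add: val_mult val_powi)

text \<open>The easy half of Kapranov's theorem.\<close>

lemma lpoly3_root_in_trop_hyp3:
  assumes "nonarch_valuation val" "finite S" "S \<noteq> {}" "lifts val S a c"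
    and "x \<noteq> 0" "y \<noteq> 0" "z \<noteq> (0::'k::field)" "lpoly3 S a (x, y, z) = 0"
  shows "(val x, val y, val z) \<in> trop_hyp3 S c"
proof -
  let ?term = "\<lambda>k. a k * x powi fst k * y powi fst (snd k) * z powi snd (snd k)"
  have nonzero: "\<forall>k\<in>S. ?term k \<noteq> 0" using assms(4-7) unfolding lifts_def by simp
  let ?trop = "\<lambda>k. c k + real_of_int (fst k) * val x
      + real_of_int (fst (snd k)) * val y + real_of_int (snd (snd k)) * val z"
  have "trop_min_twice S (\<lambda>k. val (?term k))"
    using trop_min_twice_val_if_sum_eq_0[OF assms(1-3) nonzero] assms(8)
    unfolding lpoly3_def by simp
  moreover have "val (?term k) = ?trop k" if "k \<in> S" for k
    using assms(4-7) that by (simp add: lifts_def val_monomial3[OF assms(1)])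
  ultimately have "trop_min_twice S ?trop"
    using trop_min_twice_cong[of S "\<lambda>k. val (?term k)" ?trop] by blast
  then show ?thesis unfolding trop_hyp3_def by simp
qed

definition cayley_slice :: "(int \<times> int \<times> int \<Rightarrow> 'a) \<Rightarrow> int \<Rightarrow> int \<times> int \<Rightarrow> 'a" where
  "cayley_slice a t i = a (fst i, snd i, t)"

definition cayley_lift :: "(int \<times> int \<Rightarrow> 'a) \<Rightarrow> (int \<times> int \<Rightarrow> 'a) \<Rightarrow> int \<times> int \<times> int \<Rightarrow> 'a" where
  "cayley_lift a1 a2 k = (if snd (snd k) = 0 then a1 (fst k, fst (snd k)) else a2 (fst k, fst (snd k)))"

lemma cayley_slice_lift [simp]:
  "cayley_slice (cayley_lift a1 a2) 0 = a1" "cayley_slice (cayley_lift a1 a2) 1 = a2"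
  by (simp_all add: fun_eq_iff cayley_slice_def cayley_lift_def)

lemma cayley_slice_coeff [simp]:
  "cayley_slice (cayley_coeff p1 p2) 0 = p1" "cayley_slice (cayley_coeff p1 p2) 1 = p2"
  by (simp_all add: fun_eq_iff cayley_slice_def cayley_coeff_def)

lemma finite_cayley_supp: "finite A1 \<Longrightarrow> finite A2 \<Longrightarrow> finite (cayley_supp A1 A2)"
  by (simp add: cayley_supp_def)

lemma cayley_supp_eq_empty_iff: "cayley_supp A1 A2 = {} \<longleftrightarrow> A1 = {} \<and> A2 = {}"
  by (simp add: cayley_supp_def)

lemma lifts_cayley_supp:
  "lifts val (cayley_supp A1 A2) a c \<longleftrightarrow>
     lifts val A1 (cayley_slice a 0) (cayley_slice c 0) \<and> lifts val A2 (cayley_slice a 1) (cayley_slice c 1)"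
  by (auto simp: lifts_def cayley_supp_def cayley_slice_def)

lemma sum_cayley_supp:
  assumes "finite A1" "finite A2"
  shows "(\<Sum>k\<in>cayley_supp A1 A2. h k)
       = (\<Sum>i\<in>A1. h (fst i, snd i, 0)) + (\<Sum>i\<in>A2. h (fst i, snd i, 1))"
proof -
  have "inj_on (\<lambda>i::int \<times> int. (fst i, snd i, t)) A" for t :: int and A
    by (auto simp: inj_on_def prod_eq_iff)
  then show ?thesis
    unfolding cayley_supp_def using assms
    by (subst sum.union_disjoint) (auto simp: sum.reindex)
qed

lemma lpoly3_cayley_supp:
  assumes "finite A1" "finite A2"
  shows "lpoly3 (cayley_supp A1 A2) a (x, y, z)
       = lpoly2 A1 (cayley_slice a 0) (x, y) + z * lpoly2 A2 (cayley_slice a 1) (x, y)"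
  unfolding lpoly3_def lpoly2_def sum_cayley_supp[OF assms] cayley_slice_def
  by (simp add: sum_distrib_left algebra_simps)

lemma lpoly3_d1_cayley_supp:
  assumes "finite A1" "finite A2"
  shows "lpoly3_d1 (cayley_supp A1 A2) a (x, y, z)
       = lpoly2_d1 A1 (cayley_slice a 0) (x, y) + z * lpoly2_d1 A2 (cayley_slice a 1) (x, y)"
  unfolding lpoly3_d1_def lpoly2_d1_def sum_cayley_supp[OF assms] cayley_slice_def
  by (simp add: sum_distrib_left algebra_simps)

lemma lpoly3_d2_cayley_supp:
  assumes "finite A1" "finite A2"
  shows "lpoly3_d2 (cayley_supp A1 A2) a (x, y, z)
       = lpoly2_d2 A1 (cayley_slice a 0) (x, y) + z * lpoly2_d2 A2 (cayley_slice a 1) (x, y)"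
  unfolding lpoly3_d2_def lpoly2_d2_def sum_cayley_supp[OF assms] cayley_slice_def
  by (simp add: sum_distrib_left algebra_simps)

lemma lpoly3_d3_cayley_supp:
  assumes "finite A1" "finite A2"
  shows "lpoly3_d3 (cayley_supp A1 A2) a (x, y, z) = lpoly2 A2 (cayley_slice a 1) (x, y)"
  unfolding lpoly3_d3_def lpoly2_def sum_cayley_supp[OF assms] cayley_slice_def
  by simp

lemma cayley_singular_if_non_transversal:
  fixes val :: "'k::field \<Rightarrow> real"
  assumes "nonarch_valuation val" "finite A1" "finite A2" "A1 \<noteq> {}"
    and "non_transversal val A1 p1 A2 p2 q"
  shows "\<exists>l. trop_singular3 val (cayley_supp A1 A2) (cayley_coeff p1 p2) (fst q, snd q, l)"
proof -
  obtain a1 a2 :: "int \<times> int \<Rightarrow> 'k" and x y y1 y2 where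
    lifts: "lifts val A1 a1 p1" "lifts val A2 a2 p2" and
    point: "x \<noteq> 0" "y \<noteq> 0" "val x = fst q" "val y = snd q" and
    roots: "lpoly2 A1 a1 (x, y) = 0" "lpoly2 A2 a2 (x, y) = 0" and
    y12: "y1 \<noteq> 0" "y2 \<noteq> 0"
      "lpoly2_d1 A1 a1 (x, y) * y1 + lpoly2_d1 A2 a2 (x, y) * y2 = 0"
      "lpoly2_d2 A1 a1 (x, y) * y1 + lpoly2_d2 A2 a2 (x, y) * y2 = 0"
    using assms(5) unfolding non_transversal_def by (auto simp: split_paired_Ex)
  define z where "z = y2 / y1"
  define a where "a = cayley_lift a1 a2"
  have z: "z \<noteq> 0" using y12 by (simp add: z_def)
  have lift: "lifts val (cayley_supp A1 A2) a (cayley_coeff p1 p2)"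
    using lifts by (simp add: a_def lifts_cayley_supp)
  have "lpoly2_d1 A1 a1 (x, y) + z * lpoly2_d1 A2 a2 (x, y) = 0"
       "lpoly2_d2 A1 a1 (x, y) + z * lpoly2_d2 A2 a2 (x, y) = 0"
    using y12 by (simp_all add: z_def field_simps)
  then have singular: "lpoly3 (cayley_supp A1 A2) a (x, y, z) = 0"
      "lpoly3_d1 (cayley_supp A1 A2) a (x, y, z) = 0"
      "lpoly3_d2 (cayley_supp A1 A2) a (x, y, z) = 0"
      "lpoly3_d3 (cayley_supp A1 A2) a (x, y, z) = 0"
    using roots assms(2,3) by (simp_all add: a_def lpoly3_cayley_supp lpoly3_d1_cayley_supp
        lpoly3_d2_cayley_supp lpoly3_d3_cayley_supp)
  have "(fst q, snd q, val z) \<in> trop_hyp3 (cayley_supp A1 A2) (cayley_coeff p1 p2)"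
    using lpoly3_root_in_trop_hyp3[OF assms(1) _ _ lift point(1,2) z singular(1)] point assms(2-4)
    by (simp add: finite_cayley_supp cayley_supp_eq_empty_iff)
  then have "trop_singular3 val (cayley_supp A1 A2) (cayley_coeff p1 p2) (fst q, snd q, val z)"
    unfolding trop_singular3_def using lift point z singular
    by (intro conjI exI[of _ a] exI[of _ "(x, y, z)"]) simp_all
  then show ?thesis by blast
qed

lemma non_transversal_if_cayley_singular:
  fixes val :: "'k::field \<Rightarrow> real"
  assumes "finite A1" "finite A2" "q \<in> trop_hyp2 A1 p1" "q \<in> trop_hyp2 A2 p2"
    and "trop_singular3 val (cayley_supp A1 A2) (cayley_coeff p1 p2) (fst q, snd q, l)"
  shows "non_transversal val A1 p1 A2 p2 q"
proof -
  obtain a :: "int \<times> int \<times> int \<Rightarrow> 'k" and x y z where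
    lift: "lifts val (cayley_supp A1 A2) a (cayley_coeff p1 p2)" and
    point: "x \<noteq> 0" "y \<noteq> 0" "z \<noteq> 0" "val x = fst q" "val y = snd q" and
    singular: "lpoly3 (cayley_supp A1 A2) a (x, y, z) = 0"
      "lpoly3_d1 (cayley_supp A1 A2) a (x, y, z) = 0"
      "lpoly3_d2 (cayley_supp A1 A2) a (x, y, z) = 0"
      "lpoly3_d3 (cayley_supp A1 A2) a (x, y, z) = 0"
    using assms(5) unfolding trop_singular3_def by (auto simp: split_paired_Ex)
  let ?a1 = "cayley_slice a 0" and ?a2 = "cayley_slice a 1"
  have roots: "lpoly2 A2 ?a2 (x, y) = 0" "lpoly2 A1 ?a1 (x, y) = 0"
    using singular(1,4) assms(1,2) by (simp_all add: lpoly3_cayley_supp lpoly3_d3_cayley_supp)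
  have linear: "lpoly2_d1 A1 ?a1 (x, y) * 1 + lpoly2_d1 A2 ?a2 (x, y) * z = 0"
      "lpoly2_d2 A1 ?a1 (x, y) * 1 + lpoly2_d2 A2 ?a2 (x, y) * z = 0"
    using singular(2,3) assms(1,2)
    by (simp_all add: lpoly3_d1_cayley_supp lpoly3_d2_cayley_supp mult.commute)
  have "lifts val A1 ?a1 p1" "lifts val A2 ?a2 p2"
    using lift by (simp_all add: lifts_cayley_supp)
  then show ?thesis
    unfolding non_transversal_def using assms(3,4) point roots linear
    by (intro conjI exI[of _ ?a1] exI[of _ ?a2] exI[of _ "(x, y)"] exI[of _ "1::'k"] exI[of _ z])
      simp_all
qed

theorem lemma5p2:
  fixes val :: "'k::field_char_0 \<Rightarrow> real"
    and A1 A2 :: "(int \<times> int) set"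
    and p1 p2 :: "int \<times> int \<Rightarrow> real"
    and q :: "real \<times> real"
  assumes "alg_closed TYPE('k)"
    and "nonarch_valuation val"
    and "residue_char_0 val"
    and "finite A1" and "finite A2"
    and "card A1 \<ge> 2" and "card A2 \<ge> 2"
    and "\<forall>z::int \<times> int. \<exists>u\<in>int_span2 A1. \<exists>v\<in>int_span2 A2.
            z = (fst u + fst v, snd u + snd v)"
    and "q \<in> trop_hyp2 A1 p1" and "q \<in> trop_hyp2 A2 p2"
  shows "non_transversal val A1 p1 A2 p2 q \<longleftrightarrow>
         (\<exists>l::real. trop_singular3 val (cayley_supp A1 A2) (cayley_coeff p1 p2) (fst q, snd q, l))"
proof -
  have "A1 \<noteq> {}" using assms(6) by auto
  then show ?thesis
    using cayley_singular_if_non_transversal[OF assms(2,4,5)]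
      non_transversal_if_cayley_singular[OF assms(4,5,9,10)]
    by blast
qed

end
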